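(* Let $\phi:\mathbb{F}_2^n\to\mathbb{C}$ be a stabilizer state and $L=\mathcal{L}(\phi)$ its Lagrangian subspace. Then for every nonzero $f:\mathbb{F}_2^n\to\mathbb{C}$, $$\Big(\frac{|\langle f,\phi\rangle|}{\|f\|_2}\Big)^4\le P_f(L)\le\Big(\frac{\|f\|_{U^3}}{\|f\|_2}\Big)^4.$$
   Context: $\langle f,g\rangle=\mathbb{E}_xf(x)\overline{g(x)}$, $\|f\|_2=\langle f,f\rangle^{1/2}$, $\Delta_af(x)=f(x+a)\overline{f(x)}$, $\hat g(b)=\mathbb{E}_xg(x)(-1)^{b\cdot x}$, $\|f\|_{U^3}=(\mathbb{E}_{x,a,b,c}\Delta_a\Delta_b\Delta_cf(x))^{1/8}$. A stabilizer state is $\phi$ with $\|\phi\|_2=\|\phi\|_{U^3}=1$; for such $\phi$ there is a unique Lagrangian subspace $\mathcal{L}(\phi)\le\mathbb{F}_2^{2n}$ (maximal isotropic for $[(a,b),(c,d)]=a\cdot d+b\cdot c$) with $|\widehat{\Delta_a\phi}(b)|=\mathbf{1}_{\mathcal{L}(\phi)}(a,b)$. The characteristic distribution of nonzero $f$ is the probability distribution $P_f(a,b)=|\widehat{\Delta_af}(b)|^2/(2^n\|f\|_2^4)$ on $\mathbb{F}_2^{2n}$, and $P_f(L)=\sum_{(a,b)\in L}P_f(a,b)$. *)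

theory Defs
  imports Complex_Main
begin

text \<open>The vector space F_2^n is modelled as 'n \<Rightarrow> bool for a finite index type 'n,
  with n = card (UNIV :: 'n set). Addition is pointwise exclusive or.\<close>

type_synonym 'n f2vec = "'n \<Rightarrow> bool"

definition vadd :: "'n f2vec \<Rightarrow> 'n f2vec \<Rightarrow> 'n f2vec" where
  "vadd x y = (\<lambda>i. x i \<noteq> y i)"

definition vzero :: "'n f2vec" where
  "vzero = (\<lambda>i. False)"

text \<open>Dot product a \<cdot> x, as a natural number (only its parity matters).\<close>
definition dotp :: "('n::finite) f2vec \<Rightarrow> 'n f2vec \<Rightarrow> nat" where
  "dotp x y = card {i. x i \<and> y i}"

definition avg :: "(('n::finite) f2vec \<Rightarrow> complex) \<Rightarrow> complex" where
  "avg g = (\<Sum>x\<in>UNIV. g x) / (2 ^ card (UNIV :: 'n set))"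

definition inner_f :: "(('n::finite) f2vec \<Rightarrow> complex) \<Rightarrow> ('n f2vec \<Rightarrow> complex) \<Rightarrow> complex" where
  "inner_f f g = avg (\<lambda>x. f x * cnj (g x))"

definition norm2 :: "(('n::finite) f2vec \<Rightarrow> complex) \<Rightarrow> real" where
  "norm2 f = sqrt (Re (inner_f f f))"

definition Delta :: "'n f2vec \<Rightarrow> ('n f2vec \<Rightarrow> complex) \<Rightarrow> 'n f2vec \<Rightarrow> complex" where
  "Delta a f x = f (vadd x a) * cnj (f x)"

definition fhat :: "(('n::finite) f2vec \<Rightarrow> complex) \<Rightarrow> 'n f2vec \<Rightarrow> complex" where
  "fhat g b = avg (\<lambda>x. g x * (-1) ^ dotp b x)"

text \<open>Gowers U^3 norm: (E_{x,a,b,c} \<Delta>_a \<Delta>_b \<Delta>_c f(x))^{1/8}; the average is a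
  nonnegative real number, we take its real part.\<close>
definition U3 :: "(('n::finite) f2vec \<Rightarrow> complex) \<Rightarrow> real" where
  "U3 f = (Re (avg (\<lambda>x. avg (\<lambda>a. avg (\<lambda>b. avg (\<lambda>c.
              Delta a (Delta b (Delta c f)) x)))))) powr (1/8)"

definition stabilizer_state :: "(('n::finite) f2vec \<Rightarrow> complex) \<Rightarrow> bool" where
  "stabilizer_state \<phi> \<longleftrightarrow> norm2 \<phi> = 1 \<and> U3 \<phi> = 1"

text \<open>Symplectic form on F_2^{2n}: [(a,b),(c,d)] = a\<cdot>d + b\<cdot>c (mod 2); it vanishes iff even.\<close>
definition sympl_zero :: "(('n::finite) f2vec \<times> 'n f2vec) \<Rightarrow> ('n f2vec \<times> 'n f2vec) \<Rightarrow> bool" where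
  "sympl_zero u v = even (dotp (fst u) (snd v) + dotp (snd u) (fst v))"

definition subspace2 :: "(('n::finite) f2vec \<times> 'n f2vec) set \<Rightarrow> bool" where
  "subspace2 L \<longleftrightarrow> (vzero, vzero) \<in> L \<and>
     (\<forall>u\<in>L. \<forall>v\<in>L. (vadd (fst u) (fst v), vadd (snd u) (snd v)) \<in> L)"

definition isotropic :: "(('n::finite) f2vec \<times> 'n f2vec) set \<Rightarrow> bool" where
  "isotropic L \<longleftrightarrow> subspace2 L \<and> (\<forall>u\<in>L. \<forall>v\<in>L. sympl_zero u v)"

definition lagrangian :: "(('n::finite) f2vec \<times> 'n f2vec) set \<Rightarrow> bool" where
  "lagrangian L \<longleftrightarrow> isotropic L \<and> (\<forall>M. isotropic M \<and> L \<subseteq> M \<longrightarrow> M = L)"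

definition char_dist :: "(('n::finite) f2vec \<Rightarrow> complex) \<Rightarrow> ('n f2vec \<times> 'n f2vec) \<Rightarrow> real" where
  "char_dist f ab = (cmod (fhat (Delta (fst ab) f) (snd ab)))^2 / (2 ^ card (UNIV :: 'n set) * (norm2 f)^4)"

definition char_dist_set :: "(('n::finite) f2vec \<Rightarrow> complex) \<Rightarrow> ('n f2vec \<times> 'n f2vec) set \<Rightarrow> real" where
  "char_dist_set f L = (\<Sum>ab\<in>L. char_dist f ab)"

definition lagr_of :: "(('n::finite) f2vec \<Rightarrow> complex) \<Rightarrow> ('n f2vec \<times> 'n f2vec) set" where
  "lagr_of \<phi> = (THE L. lagrangian L \<and>
      (\<forall>a b. cmod (fhat (Delta a \<phi>) b) = (if (a, b) \<in> L then 1 else 0)))"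

end

(* For a stabilizer state phi put gamma(a,b) = hat(Delta_a phi)(b) = <W_(a,b) phi, phi>, where
   W_(a,b) g (x) = (-1)^(b.x) g(x+a) are the unitary Weyl operators. Cauchy-Schwarz gives
   |gamma| <= 1, while ||phi||_2 = ||phi||_U3 = 1 says that the second and the fourth moments of
   |gamma| over F_2^2n both equal 2^n; hence |gamma| takes only the values 0 and 1. Its support L
   is the set of Weyl operators having phi as an eigenvector, so L is closed under addition, the
   commutation phases of the W_u on L are trivial (L is isotropic), and |L| = 2^n: L is Lagrangian.

   Lower bound: P = sum_(u in L) conj(gamma_u) W_u satisfies P^2 = 2^n P, P phi = 2^n phi and is
   self-adjoint, so Cauchy-Schwarz for P f against phi gives
   2^n |<f,phi>|^2 <= sum_(u in L) |hat(Delta_a f)(b)|; Cauchy-Schwarz over L squares this.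
   Upper bound: Cauchy-Schwarz over L bounds the second moment of |hat(Delta_a f)(b)| on L by
   its fourth moment on all of F_2^2n, which is 2^n ||f||_U3^8. *)

theory Submission
  imports Defs "HOL-Library.Cardinality" "HOL-Analysis.Convex"
begin

section \<open>The group \<open>\<bbbF>_2^n\<close> and its characters\<close>

type_synonym 'n f2pair = "'n f2vec \<times> 'n f2vec"

lemma vadd_commute: "vadd x y = vadd y x"
  unfolding vadd_def by auto

lemma vadd_assoc: "vadd (vadd x y) z = vadd x (vadd y z)"
  unfolding vadd_def by auto

lemma vadd_vzero [simp]: "vadd x vzero = x" "vadd vzero x = x"
  unfolding vadd_def vzero_def by auto

lemma vadd_vadd_cancel [simp]: "vadd (vadd x a) a = x" "vadd a (vadd a x) = x"
  unfolding vadd_def by auto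

lemma vadd_eq_vzero_iff: "vadd x y = vzero \<longleftrightarrow> x = y"
  unfolding vadd_def vzero_def by (auto simp: fun_eq_iff)

lemma card_f2vec: "card (UNIV :: ('n::finite) f2vec set) = 2 ^ CARD('n)"
  by (simp add: card_fun)

lemma sum_translate: "(\<Sum>x\<in>UNIV. g (vadd x a)) = (\<Sum>x\<in>UNIV. g x)"
  by (rule sum.reindex_bij_witness[where i="\<lambda>x. vadd x a" and j="\<lambda>x. vadd x a"]) auto

lemma sum_UNIV_prod: "(\<Sum>u\<in>UNIV. F u) = (\<Sum>a\<in>UNIV. \<Sum>b\<in>UNIV. F (a, b))"
proof -
  have "sum F UNIV = sum F (UNIV \<times> UNIV)" by simp
  then show ?thesis by (simp only: sum.cartesian_product')
qed

lemma dotp_commute: "dotp x y = dotp y x"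
  unfolding dotp_def by (simp add: conj_commute)

lemma dotp_vadd_right: "dotp b (vadd x y) + 2 * card {i. b i \<and> x i \<and> y i} = dotp b x + dotp b y"
proof -
  define A where "A = {i. b i \<and> x i \<and> y i}"
  define B where "B = {i. b i \<and> x i \<and> \<not> y i}"
  define C where "C = {i. b i \<and> \<not> x i \<and> y i}"
  have "{i. b i \<and> x i} = A \<union> B" "{i. b i \<and> y i} = A \<union> C" "{i. b i \<and> vadd x y i} = B \<union> C"
    by (auto simp: A_def B_def C_def vadd_def)
  moreover have "A \<inter> B = {}" "A \<inter> C = {}" "B \<inter> C = {}"
    by (auto simp: A_def B_def C_def)
  ultimately show ?thesis
    unfolding dotp_def A_def[symmetric] by (simp add: card_Un_disjoint)
qed

definition chi :: "('n::finite) f2vec \<Rightarrow> 'n f2vec \<Rightarrow> complex" where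
  "chi b x = (-1) ^ dotp b x"

lemma chi_vadd_right: "chi b (vadd x y) = chi b x * chi b y"
proof -
  have "chi b x * chi b y = (-1) ^ (dotp b (vadd x y) + 2 * card {i. b i \<and> x i \<and> y i})"
    unfolding chi_def by (simp add: dotp_vadd_right power_add)
  then show ?thesis
    unfolding chi_def by (simp add: power_add power_mult)
qed

lemma chi_commute: "chi b x = chi x b"
  unfolding chi_def by (simp add: dotp_commute)

lemma chi_vadd_left: "chi (vadd b c) x = chi b x * chi c x"
  by (simp add: chi_commute[of _ x] chi_vadd_right)

lemma chi_cases: "chi b x = 1 \<or> chi b x = -1"
  unfolding chi_def by (simp add: minus_one_power_iff)

lemma chi_times_chi [simp]: "chi b x * chi b x = 1"
  using chi_cases[of b x] by auto

lemma cnj_chi [simp]: "cnj (chi b x) = chi b x"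
  using chi_cases[of b x] by auto

lemma norm_chi [simp]: "cmod (chi b x) = 1"
  using chi_cases[of b x] by auto

lemma chi_vzero [simp]: "chi vzero x = 1" "chi x vzero = 1"
  unfolding chi_def dotp_def vzero_def by auto

lemma sum_chi: "(\<Sum>b\<in>UNIV. chi b z) = (if z = vzero then 2 ^ CARD('n) else 0)"
  for z :: "('n::finite) f2vec"
proof (cases "z = vzero")
  case True
  then show ?thesis by (simp add: card_f2vec)
next
  case False
  then obtain i0 where "z i0" unfolding vzero_def by auto
  then have "{i. i = i0 \<and> z i} = {i0}" by auto
  then have chi_e: "chi (\<lambda>i. i = i0) z = -1"
    unfolding chi_def dotp_def by simp
  have "(\<Sum>b\<in>UNIV. chi b z) = (\<Sum>b\<in>UNIV. chi (vadd b (\<lambda>i. i = i0)) z)"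
    by (rule sum_translate[symmetric])
  also have "\<dots> = - (\<Sum>b\<in>UNIV. chi b z)"
    by (simp add: chi_vadd_left chi_e sum_negf)
  finally show ?thesis using False by simp
qed

lemma avg_commute: "avg (\<lambda>x. avg (\<lambda>y. F x y)) = avg (\<lambda>y. avg (\<lambda>x. F x y))"
  unfolding avg_def sum_divide_distrib[symmetric] by (subst sum.swap) simp

lemma avg_add: "avg (\<lambda>x. f x + g x) = avg f + avg g"
  unfolding avg_def by (simp add: sum.distrib add_divide_distrib)

lemma avg_diff: "avg (\<lambda>x. f x - g x) = avg f - avg g"
  unfolding avg_def by (simp add: sum_subtractf diff_divide_distrib)

lemma avg_mult_left: "avg (\<lambda>x. c * f x) = c * avg f"
  unfolding avg_def by (simp add: sum_distrib_left)

lemma avg_avg_Delta: "avg (\<lambda>x. avg (\<lambda>a. Delta a G x)) = avg G * cnj (avg G)"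
proof -
  have "(\<Sum>a\<in>UNIV. G (vadd x a)) = (\<Sum>a\<in>UNIV. G a)" for x
    using sum_translate[of G x] by (simp add: vadd_commute)
  then have "(\<Sum>x\<in>UNIV. \<Sum>a\<in>UNIV. G (vadd x a) * cnj (G x)) = (\<Sum>x\<in>UNIV. (\<Sum>a\<in>UNIV. G a) * cnj (G x))"
    by (simp add: sum_distrib_right[symmetric])
  then show ?thesis
    unfolding avg_def Delta_def
    by (simp add: sum_divide_distrib[symmetric] sum_distrib_left sum_distrib_right cnj_sum mult_ac)
qed

lemma inner_f_commute: "inner_f v u = cnj (inner_f u v)"
  unfolding inner_f_def avg_def by (simp add: mult.commute)

lemma inner_f_mult_left: "inner_f (\<lambda>x. c * u x) v = c * inner_f u v"
  unfolding inner_f_def avg_def by (simp add: sum_distrib_left mult_ac)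

lemma inner_f_mult_right: "inner_f u (\<lambda>x. c * v x) = cnj c * inner_f u v"
  unfolding inner_f_def avg_def by (simp add: sum_distrib_left mult_ac)

lemma inner_f_sum_left: "inner_f (\<lambda>x. \<Sum>i\<in>A. U i x) v = (\<Sum>i\<in>A. inner_f (U i) v)"
  unfolding inner_f_def avg_def
  by (simp add: sum_distrib_right sum_divide_distrib[symmetric]) (rule sum.swap)

lemma inner_f_sum_right: "inner_f u (\<lambda>x. \<Sum>i\<in>A. V i x) = (\<Sum>i\<in>A. inner_f u (V i))"
  by (subst (1 2) inner_f_commute) (simp add: inner_f_sum_left cnj_sum)

lemma inner_f_self_eq: "inner_f g g = of_real ((\<Sum>x\<in>UNIV. cmod (g x) ^ 2) / 2 ^ CARD('n))"
  for g :: "('n::finite) f2vec \<Rightarrow> complex"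
proof -
  have "(\<Sum>x\<in>UNIV. g x * cnj (g x)) = of_real (\<Sum>x\<in>UNIV. cmod (g x) ^ 2)"
    by (simp add: complex_norm_square[symmetric])
  then show ?thesis
    unfolding inner_f_def avg_def by simp
qed

lemma norm2_power2: "norm2 g ^ 2 = Re (inner_f g g)"
  unfolding norm2_def inner_f_self_eq by (simp add: sum_nonneg)

lemma inner_f_self_eq_norm2: "inner_f g g = of_real (norm2 g ^ 2)"
  unfolding norm2_power2 by (simp add: inner_f_self_eq)

lemma inner_f_self_eq_0_iff: "inner_f g g = 0 \<longleftrightarrow> g = (\<lambda>x. 0)"
  for g :: "('n::finite) f2vec \<Rightarrow> complex"
proof -
  have "inner_f g g = 0 \<longleftrightarrow> (\<Sum>x\<in>UNIV. cmod (g x) ^ 2) = 0"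
    unfolding inner_f_self_eq of_real_eq_0_iff by simp
  also have "\<dots> \<longleftrightarrow> g = (\<lambda>x. 0)"
    by (simp add: sum_nonneg_eq_0_iff fun_eq_iff)
  finally show ?thesis .
qed

lemma inner_f_self_sub_projection:
  assumes "inner_f v v = 1"
  shows "inner_f u u - inner_f u v * cnj (inner_f u v)
     = inner_f (\<lambda>x. u x - inner_f u v * v x) (\<lambda>x. u x - inner_f u v * v x)"
proof -
  define c where "c = inner_f u v"
  have "(u x - c * v x) * cnj (u x - c * v x)
      = u x * cnj (u x) - cnj c * (u x * cnj (v x)) - c * (v x * cnj (u x)) + c * cnj c * (v x * cnj (v x))"
    for x by (simp add: algebra_simps)
  then have "inner_f (\<lambda>x. u x - c * v x) (\<lambda>x. u x - c * v x)
      = inner_f u u - cnj c * inner_f u v - c * inner_f v u + c * cnj c * inner_f v v"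
    unfolding inner_f_def by (simp add: avg_add avg_diff avg_mult_left)
  then show ?thesis
    using assms by (simp add: inner_f_commute[of v u] c_def)
qed

lemma norm_inner_f_squared_le:
  assumes "inner_f v v = 1"
  shows "cmod (inner_f u v) ^ 2 \<le> Re (inner_f u u)"
proof -
  have "0 \<le> Re (inner_f u u - inner_f u v * cnj (inner_f u v))"
    unfolding inner_f_self_sub_projection[OF assms] norm2_power2[symmetric] by simp
  then show ?thesis by (simp add: complex_norm_square[symmetric])
qed

lemma eq_multiple_if_inner_f_eq:
  assumes "inner_f v v = 1" and "inner_f u u = inner_f u v * cnj (inner_f u v)"
  shows "u = (\<lambda>x. inner_f u v * v x)"
proof -
  have "inner_f (\<lambda>x. u x - inner_f u v * v x) (\<lambda>x. u x - inner_f u v * v x) = 0"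
    using inner_f_self_sub_projection[OF assms(1), of u] assms(2) by simp
  then show ?thesis
    unfolding inner_f_self_eq_0_iff by (simp add: fun_eq_iff)
qed

section \<open>Fourier analysis and the \<open>U^3\<close> norm\<close>

lemma fhat_eq_sum_chi: "fhat g b = (\<Sum>x\<in>UNIV. g x * chi b x) / 2 ^ CARD('n)"
  for g :: "('n::finite) f2vec \<Rightarrow> complex"
  by (simp add: fhat_def avg_def chi_def)

lemma parseval: "(\<Sum>b\<in>UNIV. fhat g b * cnj (fhat g b)) = inner_f g g"
  for g :: "('n::finite) f2vec \<Rightarrow> complex"
proof -
  let ?N = "2 ^ CARD('n) :: complex"
  have expand: "fhat g b * cnj (fhat g b)
      = (\<Sum>x\<in>UNIV. \<Sum>y\<in>UNIV. g x * cnj (g y) * chi b (vadd x y)) / ?N^2" for b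
    unfolding fhat_eq_sum_chi
    by (simp add: cnj_sum power2_eq_square sum_product chi_vadd_right mult_ac)
  have "(\<Sum>b\<in>UNIV. \<Sum>x\<in>UNIV. \<Sum>y\<in>UNIV. g x * cnj (g y) * chi b (vadd x y))
      = (\<Sum>x\<in>UNIV. \<Sum>y\<in>UNIV. g x * cnj (g y) * (\<Sum>b\<in>UNIV. chi b (vadd x y)))"
    unfolding sum_distrib_left by (subst sum.swap) (rule sum.cong[OF refl], rule sum.swap)
  also have "\<dots> = (\<Sum>x\<in>UNIV. g x * cnj (g x) * ?N)"
    by (simp add: sum_chi vadd_eq_vzero_iff if_distrib cong: if_cong)
  finally have "(\<Sum>b\<in>UNIV. fhat g b * cnj (fhat g b)) = (\<Sum>x\<in>UNIV. g x * cnj (g x) * ?N) / ?N^2"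
    unfolding expand sum_divide_distrib[symmetric] by simp
  also have "\<dots> = inner_f g g"
    unfolding inner_f_def avg_def by (simp add: sum_distrib_right[symmetric] power2_eq_square)
  finally show ?thesis .
qed

lemma fhat_autocorrelation: "fhat (\<lambda>t. avg (Delta t g)) b = fhat g b * cnj (fhat g b)"
  for g :: "('n::finite) f2vec \<Rightarrow> complex"
proof -
  let ?N = "2 ^ CARD('n) :: complex"
  have shift: "(\<Sum>t\<in>UNIV. g (vadd x t) * cnj (g x) * chi b t)
      = (\<Sum>t\<in>UNIV. g t * cnj (g x) * (chi b x * chi b t))" for x
    using sum_translate[of "\<lambda>t. g (vadd x t) * cnj (g x) * chi b t" x]
    by (simp add: vadd_commute[of _ x] chi_vadd_right)
  have "fhat (\<lambda>t. avg (Delta t g)) b = (\<Sum>t\<in>UNIV. \<Sum>x\<in>UNIV. g (vadd x t) * cnj (g x) * chi b t) / ?N^2"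
    unfolding fhat_eq_sum_chi avg_def Delta_def
    by (simp add: sum_divide_distrib[symmetric] sum_distrib_right power2_eq_square)
  also have "\<dots> = (\<Sum>x\<in>UNIV. \<Sum>t\<in>UNIV. g t * cnj (g x) * (chi b x * chi b t)) / ?N^2"
    by (subst sum.swap) (simp only: shift)
  also have "\<dots> = ((\<Sum>t\<in>UNIV. g t * chi b t) * (\<Sum>x\<in>UNIV. cnj (g x) * chi b x)) / ?N^2"
    unfolding sum_product by (subst sum.swap) (simp add: mult_ac)
  also have "\<dots> = fhat g b * cnj (fhat g b)"
    unfolding fhat_eq_sum_chi by (simp add: cnj_sum power2_eq_square)
  finally show ?thesis .
qed

lemma avg_norm_avg_Delta_squared:
  "avg (\<lambda>b. avg (Delta b g) * cnj (avg (Delta b g))) = (\<Sum>\<xi>\<in>UNIV. of_real (cmod (fhat g \<xi>) ^ 4))"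
  for g :: "('n::finite) f2vec \<Rightarrow> complex"
proof -
  have "avg (\<lambda>b. avg (Delta b g) * cnj (avg (Delta b g)))
      = (\<Sum>\<xi>\<in>UNIV. fhat (\<lambda>t. avg (Delta t g)) \<xi> * cnj (fhat (\<lambda>t. avg (Delta t g)) \<xi>))"
    unfolding parseval inner_f_def ..
  also have "\<dots> = (\<Sum>\<xi>\<in>UNIV. (fhat g \<xi> * cnj (fhat g \<xi>)) ^ 2)"
    unfolding fhat_autocorrelation by (simp add: power2_eq_square mult.commute)
  finally show ?thesis
    by (simp add: complex_norm_square[symmetric])
qed

lemma avg_reorder4:
  "avg (\<lambda>x. avg (\<lambda>a. avg (\<lambda>b. avg (\<lambda>c. F x a b c))))
     = avg (\<lambda>b. avg (\<lambda>c. avg (\<lambda>x. avg (\<lambda>a. F x a b c))))"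
proof -
  have inner: "avg (\<lambda>a. avg (\<lambda>b. avg (\<lambda>c. F x a b c))) = avg (\<lambda>b. avg (\<lambda>c. avg (\<lambda>a. F x a b c)))" for x
  proof -
    have "avg (\<lambda>a. avg (\<lambda>b. avg (\<lambda>c. F x a b c))) = avg (\<lambda>b. avg (\<lambda>a. avg (\<lambda>c. F x a b c)))"
      by (rule avg_commute)
    also have "\<dots> = avg (\<lambda>b. avg (\<lambda>c. avg (\<lambda>a. F x a b c)))"
      by (simp only: avg_commute[of "\<lambda>a c. F x a _ c"])
    finally show ?thesis .
  qed
  have "avg (\<lambda>x. avg (\<lambda>a. avg (\<lambda>b. avg (\<lambda>c. F x a b c))))
      = avg (\<lambda>b. avg (\<lambda>x. avg (\<lambda>c. avg (\<lambda>a. F x a b c))))"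
    by (simp only: inner) (rule avg_commute)
  also have "\<dots> = avg (\<lambda>b. avg (\<lambda>c. avg (\<lambda>x. avg (\<lambda>a. F x a b c))))"
    by (simp only: avg_commute[of "\<lambda>x c. avg (\<lambda>a. F x a _ c)"])
  finally show ?thesis .
qed

lemma U3_average_eq:
  "avg (\<lambda>x. avg (\<lambda>a. avg (\<lambda>b. avg (\<lambda>c. Delta a (Delta b (Delta c f)) x))))
     = of_real ((\<Sum>c\<in>UNIV. \<Sum>\<xi>\<in>UNIV. cmod (fhat (Delta c f) \<xi>) ^ 4) / 2 ^ CARD('n))"
  for f :: "('n::finite) f2vec \<Rightarrow> complex"
proof -
  have "avg (\<lambda>x. avg (\<lambda>a. avg (\<lambda>b. avg (\<lambda>c. Delta a (Delta b (Delta c f)) x))))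
      = avg (\<lambda>b. avg (\<lambda>c. avg (Delta b (Delta c f)) * cnj (avg (Delta b (Delta c f)))))"
    by (simp only: avg_reorder4 avg_avg_Delta)
  also have "\<dots> = avg (\<lambda>c. avg (\<lambda>b. avg (Delta b (Delta c f)) * cnj (avg (Delta b (Delta c f)))))"
    by (rule avg_commute)
  also have "\<dots> = avg (\<lambda>c. \<Sum>\<xi>\<in>UNIV. of_real (cmod (fhat (Delta c f) \<xi>) ^ 4))"
    by (simp only: avg_norm_avg_Delta_squared)
  also have "\<dots> = of_real ((\<Sum>c\<in>UNIV. \<Sum>\<xi>\<in>UNIV. cmod (fhat (Delta c f) \<xi>) ^ 4) / 2 ^ CARD('n))"
    unfolding avg_def by simp
  finally show ?thesis .
qed

lemma U3_power_8: "U3 f ^ 8 = (\<Sum>a\<in>UNIV. \<Sum>b\<in>UNIV. cmod (fhat (Delta a f) b) ^ 4) / 2 ^ CARD('n)"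
  for f :: "('n::finite) f2vec \<Rightarrow> complex"
proof -
  define R where "R = (\<Sum>a\<in>UNIV. \<Sum>b\<in>UNIV. cmod (fhat (Delta a f) b) ^ 4) / 2 ^ CARD('n)"
  have "0 \<le> R"
    unfolding R_def by (simp add: sum_nonneg)
  have "U3 f = R powr (1/8)"
    unfolding U3_def U3_average_eq R_def by simp
  moreover have "(R powr (1/8)) ^ 8 = R"
    using \<open>0 \<le> R\<close> by (cases "R = 0") (simp_all add: powr_power)
  ultimately show ?thesis
    unfolding R_def by simp
qed

lemma sum_norm_fhat_Delta_squared:
  "(\<Sum>a\<in>UNIV. \<Sum>b\<in>UNIV. cmod (fhat (Delta a g) b) ^ 2) = 2 ^ CARD('n) * norm2 g ^ 4"
  for g :: "('n::finite) f2vec \<Rightarrow> complex"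
proof -
  define G where "G x = g x * cnj (g x)" for x
  have cnj_G: "cnj (G x) = G x" for x
    unfolding G_def by (simp add: mult.commute)
  have "of_real (\<Sum>a\<in>UNIV. \<Sum>b\<in>UNIV. cmod (fhat (Delta a g) b) ^ 2)
      = (\<Sum>a\<in>UNIV. \<Sum>b\<in>UNIV. fhat (Delta a g) b * cnj (fhat (Delta a g) b))"
    by (simp add: complex_norm_square[symmetric])
  also have "\<dots> = (\<Sum>a\<in>UNIV. avg (\<lambda>x. Delta a G x))"
    unfolding parseval inner_f_def by (simp add: Delta_def G_def cnj_G mult_ac)
  also have "\<dots> = 2 ^ CARD('n) * avg (\<lambda>a. avg (\<lambda>x. Delta a G x))"
    unfolding avg_def[of "\<lambda>a. avg (\<lambda>x. Delta a G x)"] by simp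
  also have "\<dots> = 2 ^ CARD('n) * (avg G * cnj (avg G))"
    by (simp only: avg_commute[of "\<lambda>a x. Delta a G x"] avg_avg_Delta)
  also have "avg G = of_real (norm2 g ^ 2)"
    unfolding G_def inner_f_def[symmetric] by (rule inner_f_self_eq_norm2)
  finally have "of_real (\<Sum>a\<in>UNIV. \<Sum>b\<in>UNIV. cmod (fhat (Delta a g) b) ^ 2)
      = (of_real (2 ^ CARD('n) * norm2 g ^ 4) :: complex)"
    by simp
  then show ?thesis
    by (simp only: of_real_eq_iff)
qed

lemma char_dist_set_eq:
  "char_dist_set f L
     = (\<Sum>u\<in>L. cmod (fhat (Delta (fst u) f) (snd u)) ^ 2) / (2 ^ CARD('n) * norm2 f ^ 4)"
  for f :: "('n::finite) f2vec \<Rightarrow> complex"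
  unfolding char_dist_set_def char_dist_def by (simp add: sum_divide_distrib)

lemma char_dist_set_le_U3:
  fixes f :: "('n::finite) f2vec \<Rightarrow> complex" and L :: "'n f2pair set"
  assumes "card L \<le> 2 ^ CARD('n)"
  shows "char_dist_set f L \<le> (U3 f / norm2 f) ^ 4"
proof -
  define N :: real where "N = 2 ^ CARD('n)"
  define q where "q u = cmod (fhat (Delta (fst u) f) (snd u)) ^ 2" for u
  define S where "S = (\<Sum>u\<in>L. q u)"
  have "S ^ 2 \<le> (\<Sum>u\<in>L. q u ^ 2) * card L"
    unfolding S_def by (rule sum_squared_le_sum_of_squares)
  also have "\<dots> \<le> (\<Sum>u\<in>UNIV. q u ^ 2) * N"
    using assms by (intro mult_mono sum_mono2) (auto simp: N_def sum_nonneg)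
  also have "(\<Sum>u\<in>UNIV. q u ^ 2) = N * U3 f ^ 8"
    unfolding U3_power_8 sum_UNIV_prod q_def N_def by simp
  finally have "S ^ 2 \<le> (N * U3 f ^ 4) ^ 2"
    by (simp add: power2_eq_square algebra_simps)
  then have "S \<le> N * U3 f ^ 4"
    by (rule power2_le_imp_le) (simp add: N_def)
  then have "S / (N * norm2 f ^ 4) \<le> N * U3 f ^ 4 / (N * norm2 f ^ 4)"
    by (rule divide_right_mono) (simp add: N_def)
  then show ?thesis
    unfolding char_dist_set_eq by (simp add: S_def q_def N_def power_divide)
qed

section \<open>Weyl operators and the symplectic form\<close>

definition padd :: "'n f2pair \<Rightarrow> 'n f2pair \<Rightarrow> 'n f2pair" where
  "padd u v = (vadd (fst u) (fst v), vadd (snd u) (snd v))"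

lemma padd_commute: "padd u v = padd v u"
  unfolding padd_def by (simp add: vadd_commute)

lemma padd_padd_cancel [simp]: "padd (padd u v) v = u" "padd u (padd u v) = v"
  unfolding padd_def by (simp_all add: vadd_assoc[symmetric])

definition weyl :: "('n::finite) f2pair \<Rightarrow> ('n f2vec \<Rightarrow> complex) \<Rightarrow> 'n f2vec \<Rightarrow> complex" where
  "weyl u g x = chi (snd u) x * g (vadd x (fst u))"

lemma fhat_Delta_eq_inner_weyl: "fhat (Delta a g) b = inner_f (weyl (a, b) g) g"
  unfolding fhat_def inner_f_def weyl_def Delta_def chi_def by (simp add: mult_ac)

lemma weyl_vzero [simp]: "weyl (vzero, vzero) g = g"
  unfolding weyl_def by simp

lemma weyl_mult: "weyl u (\<lambda>x. c * g x) = (\<lambda>x. c * weyl u g x)"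
  unfolding weyl_def by (simp add: fun_eq_iff mult_ac)

lemma weyl_sum: "weyl u (\<lambda>y. \<Sum>i\<in>A. F i y) x = (\<Sum>i\<in>A. weyl u (F i) x)"
  unfolding weyl_def by (simp add: sum_distrib_left)

lemma weyl_weyl: "weyl u (weyl v g) = (\<lambda>x. chi (snd v) (fst u) * weyl (padd u v) g x)"
  unfolding weyl_def padd_def by (simp add: fun_eq_iff chi_vadd_left chi_vadd_right vadd_assoc mult_ac)

lemma inner_f_weyl_left: "inner_f (weyl u g) k = chi (snd u) (fst u) * inner_f g (weyl u k)"
  for g k :: "('n::finite) f2vec \<Rightarrow> complex"
proof -
  have "(\<Sum>x\<in>UNIV. weyl u g x * cnj (k x)) = (\<Sum>x\<in>UNIV. weyl u g (vadd x (fst u)) * cnj (k (vadd x (fst u))))"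
    by (rule sum_translate[symmetric])
  also have "\<dots> = (\<Sum>x\<in>UNIV. chi (snd u) (fst u) * (g x * cnj (weyl u k x)))"
    unfolding weyl_def by (simp add: chi_vadd_right mult_ac)
  finally show ?thesis
    unfolding inner_f_def avg_def by (simp add: sum_distrib_left)
qed

lemma inner_f_weyl_weyl: "inner_f (weyl u g) (weyl u g) = inner_f g g"
  for g :: "('n::finite) f2vec \<Rightarrow> complex"
proof -
  have "weyl u g x * cnj (weyl u g x) = g (vadd x (fst u)) * cnj (g (vadd x (fst u)))" for x
    unfolding weyl_def by (simp add: mult_ac)
  then show ?thesis
    unfolding inner_f_def avg_def by (simp add: sum_translate[of "\<lambda>x. g x * cnj (g x)"])
qed

definition sympl_char :: "('n::finite) f2pair \<Rightarrow> 'n f2pair \<Rightarrow> complex" where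
  "sympl_char u v = chi (fst u) (snd v) * chi (snd u) (fst v)"

lemma sympl_zero_iff: "sympl_zero u v \<longleftrightarrow> sympl_char u v = 1"
  unfolding sympl_zero_def sympl_char_def chi_def
  by (simp add: power_add[symmetric] minus_one_power_iff)

lemma sympl_char_padd_left: "sympl_char (padd u w) v = sympl_char u v * sympl_char w v"
  unfolding sympl_char_def padd_def by (simp add: chi_vadd_left mult_ac)

lemma sympl_char_cases: "sympl_char u v = 1 \<or> sympl_char u v = -1"
  unfolding sympl_char_def using chi_cases[of "fst u" "snd v"] chi_cases[of "snd u" "fst v"] by auto

lemma sum_sympl_char:
  "(\<Sum>v\<in>UNIV. sympl_char u v) = (if u = (vzero, vzero) then (2 ^ CARD('n))^2 else 0)"
  for u :: "('n::finite) f2pair"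
proof -
  have "(\<Sum>v\<in>UNIV. sympl_char u v) = (\<Sum>c\<in>UNIV. chi c (snd u)) * (\<Sum>d\<in>UNIV. chi d (fst u))"
    unfolding sum_UNIV_prod sympl_char_def sum_product by (simp add: chi_commute mult_ac)
  then show ?thesis
    unfolding sum_chi by (cases u) (auto simp: power2_eq_square)
qed

lemma subspace2_iff: "subspace2 S \<longleftrightarrow> (vzero, vzero) \<in> S \<and> (\<forall>u\<in>S. \<forall>v\<in>S. padd u v \<in> S)"
  unfolding subspace2_def padd_def ..

lemma sum_padd_translate:
  assumes "subspace2 S" and "v \<in> S"
  shows "(\<Sum>w\<in>S. F (padd v w)) = (\<Sum>w\<in>S. F w)"
  using assms unfolding subspace2_iff
  by (intro sum.reindex_bij_witness[where i="padd v" and j="padd v"]) auto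

definition sympl_perp :: "('n::finite) f2pair set \<Rightarrow> 'n f2pair set" where
  "sympl_perp S = {v. \<forall>s\<in>S. sympl_char s v = 1}"

lemma sum_sympl_char_subspace:
  assumes "subspace2 S"
  shows "(\<Sum>s\<in>S. sympl_char s v) = (if v \<in> sympl_perp S then of_nat (card S) else 0)"
proof (cases "v \<in> sympl_perp S")
  case True
  then show ?thesis
    unfolding sympl_perp_def by simp
next
  case False
  then obtain s0 where s0: "s0 \<in> S" "sympl_char s0 v = -1"
    unfolding sympl_perp_def using sympl_char_cases by blast
  have "(\<Sum>s\<in>S. sympl_char s v) = (\<Sum>s\<in>S. sympl_char (padd s0 s) v)"
    by (rule sum_padd_translate[OF assms s0(1), symmetric])
  also have "\<dots> = - (\<Sum>s\<in>S. sympl_char s v)"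
    by (simp add: padd_commute[of s0] sympl_char_padd_left s0(2) sum_negf)
  finally show ?thesis
    using False by simp
qed

lemma card_mult_card_sympl_perp:
  fixes S :: "('n::finite) f2pair set"
  assumes "subspace2 S"
  shows "card S * card (sympl_perp S) = (2 ^ CARD('n))^2"
proof -
  have "(of_nat (card S * card (sympl_perp S)) :: complex)
      = (\<Sum>v\<in>UNIV. \<Sum>s\<in>S. sympl_char s v)"
    unfolding sum_sympl_char_subspace[OF assms] by (simp add: sum.If_cases)
  also have "\<dots> = (\<Sum>s\<in>S. \<Sum>v\<in>UNIV. sympl_char s v)"
    by (rule sum.swap)
  also have "\<dots> = (2 ^ CARD('n))^2"
    using assms unfolding sum_sympl_char subspace2_iff by simp
  finally show ?thesis
    by (metis of_nat_eq_iff of_nat_numeral of_nat_power)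
qed

text \<open>Such an \<open>L\<close> is its own symplectic complement, so no isotropic subspace contains it properly.\<close>
lemma lagrangian_if_isotropic_card:
  fixes L :: "('n::finite) f2pair set"
  assumes "isotropic L" and "card L = 2 ^ CARD('n)"
  shows "lagrangian L"
proof -
  have sub: "subspace2 L" and iso: "\<forall>u\<in>L. \<forall>v\<in>L. sympl_char u v = 1"
    using assms(1) unfolding isotropic_def sympl_zero_iff by auto
  have "card (sympl_perp L) = 2 ^ CARD('n)"
    using card_mult_card_sympl_perp[OF sub] assms(2) by (simp add: power2_eq_square)
  moreover have "L \<subseteq> sympl_perp L"
    using iso unfolding sympl_perp_def by auto
  ultimately have perp: "sympl_perp L = L"
    using assms(2) by (metis card_subset_eq finite)
  have "M \<subseteq> L" if "isotropic M" "L \<subseteq> M" for M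
    using that perp unfolding isotropic_def sympl_zero_iff sympl_perp_def by blast
  then show ?thesis
    unfolding lagrangian_def using assms(1) by blast
qed

section \<open>The Lagrangian subspace of a stabilizer state\<close>

locale stabilizer =
  fixes \<phi> :: "('n::finite) f2vec \<Rightarrow> complex"
  assumes stabilizer_state: "stabilizer_state \<phi>"
begin

definition \<gamma> :: "'n f2pair \<Rightarrow> complex" where
  "\<gamma> u = fhat (Delta (fst u) \<phi>) (snd u)"

lemma inner_f_phi_phi: "inner_f \<phi> \<phi> = 1"
  using stabilizer_state unfolding stabilizer_state_def by (simp add: inner_f_self_eq_norm2)

lemma \<gamma>_eq_inner_f: "\<gamma> u = inner_f (weyl u \<phi>) \<phi>"
  unfolding \<gamma>_def fhat_Delta_eq_inner_weyl by simp

lemma norm_\<gamma>_le_1: "cmod (\<gamma> u) \<le> 1"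
proof -
  have "cmod (\<gamma> u) ^ 2 \<le> 1"
    using norm_inner_f_squared_le[OF inner_f_phi_phi, of "weyl u \<phi>"]
    unfolding \<gamma>_eq_inner_f inner_f_weyl_weyl inner_f_phi_phi by simp
  then show ?thesis
    by (simp add: power_le_one_iff)
qed

lemma sum_norm_\<gamma>_power2: "(\<Sum>u\<in>UNIV. cmod (\<gamma> u) ^ 2) = 2 ^ CARD('n)"
  using sum_norm_fhat_Delta_squared[of \<phi>] stabilizer_state
  unfolding stabilizer_state_def sum_UNIV_prod \<gamma>_def by simp

lemma sum_norm_\<gamma>_power4: "(\<Sum>u\<in>UNIV. cmod (\<gamma> u) ^ 4) = 2 ^ CARD('n)"
  using U3_power_8[of \<phi>] stabilizer_state
  unfolding stabilizer_state_def sum_UNIV_prod \<gamma>_def by simp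

lemma norm_\<gamma>_0_or_1: "cmod (\<gamma> u) = 0 \<or> cmod (\<gamma> u) = 1"
proof -
  have nonneg: "0 \<le> cmod (\<gamma> v) ^ 2 - cmod (\<gamma> v) ^ 4" for v
    using norm_\<gamma>_le_1[of v] by (simp add: power_decreasing)
  have "(\<Sum>v\<in>UNIV. cmod (\<gamma> v) ^ 2 - cmod (\<gamma> v) ^ 4) = 0"
    by (simp add: sum_subtractf sum_norm_\<gamma>_power2 sum_norm_\<gamma>_power4)
  then have "cmod (\<gamma> u) ^ 2 - cmod (\<gamma> u) ^ 4 = 0"
    using sum_nonneg_eq_0_iff[of UNIV "\<lambda>v. cmod (\<gamma> v) ^ 2 - cmod (\<gamma> v) ^ 4"] nonneg finite by blast
  then have "cmod (\<gamma> u) ^ 2 * (1 - cmod (\<gamma> u) ^ 2) = 0"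
    by (simp add: right_diff_distrib power2_eq_square power4_eq_xxxx)
  then show ?thesis
    using norm_ge_zero[of "\<gamma> u"] by (auto simp: power2_eq_1_iff)
qed

definition L :: "'n f2pair set" where
  "L = {u. cmod (\<gamma> u) = 1}"

lemma weyl_eigenvector: "u \<in> L \<Longrightarrow> weyl u \<phi> = (\<lambda>x. \<gamma> u * \<phi> x)"
  using eq_multiple_if_inner_f_eq[OF inner_f_phi_phi, of "weyl u \<phi>"]
  unfolding L_def \<gamma>_eq_inner_f[symmetric] inner_f_weyl_weyl inner_f_phi_phi
  by (simp add: complex_norm_square[symmetric])

lemma \<gamma>_padd:
  assumes "u \<in> L" and "v \<in> L"
  shows "\<gamma> (padd u v) = chi (snd v) (fst u) * \<gamma> u * \<gamma> v"
proof -
  let ?c = "chi (snd v) (fst u)"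
  have eq: "?c * weyl (padd u v) \<phi> x = \<gamma> v * (\<gamma> u * \<phi> x)" for x
    using fun_cong[OF weyl_weyl[of u v \<phi>], of x]
    unfolding weyl_eigenvector[OF assms(2)] weyl_mult weyl_eigenvector[OF assms(1)] by simp
  have "weyl (padd u v) \<phi> x = ?c * (?c * weyl (padd u v) \<phi> x)" for x
    by (simp add: mult.assoc[symmetric])
  then have "weyl (padd u v) \<phi> = (\<lambda>x. (?c * \<gamma> u * \<gamma> v) * \<phi> x)"
    unfolding eq by (simp add: fun_eq_iff mult_ac)
  then show ?thesis
    unfolding \<gamma>_eq_inner_f[of "padd u v"] by (simp add: inner_f_mult_left inner_f_phi_phi)
qed

lemma subspace2_L: "subspace2 L"
proof -
  have "(vzero, vzero) \<in> L"
    unfolding L_def \<gamma>_eq_inner_f by (simp add: inner_f_phi_phi)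
  moreover have "padd u v \<in> L" if "u \<in> L" "v \<in> L" for u v
    using that \<gamma>_padd[OF that] unfolding L_def by (simp add: norm_mult)
  ultimately show ?thesis
    unfolding subspace2_iff by blast
qed

lemma isotropic_L: "isotropic L"
proof -
  have "sympl_char u v = 1" if "u \<in> L" "v \<in> L" for u v
  proof -
    have "\<gamma> u \<noteq> 0" "\<gamma> v \<noteq> 0"
      using that unfolding L_def by auto
    moreover have "chi (snd v) (fst u) * \<gamma> u * \<gamma> v = chi (snd u) (fst v) * \<gamma> v * \<gamma> u"
      using \<gamma>_padd[OF that] \<gamma>_padd[OF that(2,1)] by (simp add: padd_commute)
    ultimately have "chi (snd v) (fst u) = chi (snd u) (fst v)"
      by (simp add: mult_ac)
    then show ?thesis
      unfolding sympl_char_def by (simp add: chi_commute[of "fst u"])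
  qed
  then show ?thesis
    unfolding isotropic_def sympl_zero_iff using subspace2_L by blast
qed

lemma card_L: "card L = 2 ^ CARD('n)"
proof -
  have "cmod (\<gamma> u) ^ 2 = of_bool (u \<in> L)" for u
    using norm_\<gamma>_0_or_1[of u] unfolding L_def by auto
  then have "real (card L) = 2 ^ CARD('n)"
    using sum_norm_\<gamma>_power2 by simp
  then show ?thesis
    by (metis of_nat_eq_iff of_nat_numeral of_nat_power)
qed

lemma lagr_of_eq_L: "lagr_of \<phi> = L"
  unfolding lagr_of_def
proof (rule the_equality)
  show "lagrangian L \<and> (\<forall>a b. cmod (fhat (Delta a \<phi>) b) = (if (a, b) \<in> L then 1 else 0))"
    using lagrangian_if_isotropic_card[OF isotropic_L card_L] norm_\<gamma>_0_or_1
    unfolding L_def \<gamma>_def by force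
next
  fix M
  assume "lagrangian M \<and> (\<forall>a b. cmod (fhat (Delta a \<phi>) b) = (if (a, b) \<in> M then 1 else 0))"
  then show "M = L"
    unfolding L_def \<gamma>_def by auto
qed

subsection \<open>The lower bound\<close>

lemma cnj_\<gamma>_mult_chi: "cnj (\<gamma> u) * chi (snd u) (fst u) = \<gamma> u"
proof -
  have "\<gamma> u = chi (snd u) (fst u) * inner_f \<phi> (weyl u \<phi>)"
    unfolding \<gamma>_eq_inner_f by (rule inner_f_weyl_left)
  also have "inner_f \<phi> (weyl u \<phi>) = cnj (\<gamma> u)"
    unfolding \<gamma>_eq_inner_f by (rule inner_f_commute)
  finally have "cnj (\<gamma> u) = cnj (chi (snd u) (fst u) * cnj (\<gamma> u))"
    by (rule arg_cong)
  then have "cnj (\<gamma> u) * chi (snd u) (fst u) = (chi (snd u) (fst u) * chi (snd u) (fst u)) * \<gamma> u"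
    by (simp add: mult_ac)
  then show ?thesis
    by simp
qed

text \<open>Up to the factor \<open>2^n\<close>, \<open>proj\<close> is the orthogonal projection onto \<open>\<phi>\<close>.\<close>
definition proj :: "('n f2vec \<Rightarrow> complex) \<Rightarrow> 'n f2vec \<Rightarrow> complex" where
  "proj g x = (\<Sum>u\<in>L. cnj (\<gamma> u) * weyl u g x)"

lemma inner_f_proj_left: "inner_f (proj g) k = inner_f g (proj k)"
proof -
  have "cnj (\<gamma> u) * inner_f (weyl u g) k = (cnj (\<gamma> u) * chi (snd u) (fst u)) * inner_f g (weyl u k)"
    for u by (simp add: inner_f_weyl_left mult.assoc)
  then have "cnj (\<gamma> u) * inner_f (weyl u g) k = \<gamma> u * inner_f g (weyl u k)" for u
    by (simp only: cnj_\<gamma>_mult_chi)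
  then show ?thesis
    unfolding proj_def inner_f_sum_left inner_f_sum_right inner_f_mult_left inner_f_mult_right
    by simp
qed

lemma proj_proj: "proj (proj g) = (\<lambda>x. 2 ^ CARD('n) * proj g x)"
proof
  fix x
  have combine: "cnj (\<gamma> v) * (cnj (\<gamma> w) * weyl v (weyl w g) x)
      = cnj (\<gamma> (padd v w)) * weyl (padd v w) g x" if "v \<in> L" "w \<in> L" for v w
    unfolding weyl_weyl \<gamma>_padd[OF that] by (simp add: mult_ac)
  have "proj (proj g) x = (\<Sum>v\<in>L. \<Sum>w\<in>L. cnj (\<gamma> v) * (cnj (\<gamma> w) * weyl v (weyl w g) x))"
    unfolding proj_def[of "proj g"] unfolding proj_def weyl_sum weyl_mult sum_distrib_left ..
  also have "\<dots> = (\<Sum>v\<in>L. \<Sum>w\<in>L. cnj (\<gamma> (padd v w)) * weyl (padd v w) g x)"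
    by (intro sum.cong refl) (simp add: combine)
  also have "\<dots> = (\<Sum>v\<in>L. proj g x)"
    unfolding proj_def by (intro sum.cong refl sum_padd_translate[OF subspace2_L])
  finally show "proj (proj g) x = 2 ^ CARD('n) * proj g x"
    by (simp add: card_L)
qed

lemma proj_phi: "proj \<phi> = (\<lambda>x. 2 ^ CARD('n) * \<phi> x)"
proof
  fix x
  have "cnj (\<gamma> u) * weyl u \<phi> x = \<phi> x" if "u \<in> L" for u
  proof -
    have "cnj (\<gamma> u) * \<gamma> u = 1"
      using that unfolding L_def by (simp add: complex_norm_square[symmetric] mult.commute)
    then show ?thesis
      unfolding weyl_eigenvector[OF that] by (simp add: mult.assoc[symmetric])
  qed
  then show "proj \<phi> x = 2 ^ CARD('n) * \<phi> x"
    unfolding proj_def by (simp add: card_L)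
qed

lemma norm_inner_f_phi_le:
  "2 ^ CARD('n) * cmod (inner_f f \<phi>) ^ 2 \<le> (\<Sum>u\<in>L. cmod (fhat (Delta (fst u) f) (snd u)))"
proof -
  define N :: real where "N = 2 ^ CARD('n)"
  have "0 < N"
    unfolding N_def by simp
  define Y where "Y = inner_f (proj f) f"
  have Y: "Y = (\<Sum>u\<in>L. cnj (\<gamma> u) * fhat (Delta (fst u) f) (snd u))"
    unfolding Y_def proj_def inner_f_sum_left inner_f_mult_left fhat_Delta_eq_inner_weyl by simp
  have "inner_f (proj f) (proj f) = inner_f (proj (proj f)) f"
    by (rule inner_f_proj_left[symmetric])
  also have "\<dots> = of_real N * Y"
    unfolding proj_proj inner_f_mult_left Y_def N_def by simp
  finally have proj_norm: "inner_f (proj f) (proj f) = of_real N * Y" .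
  have proj_inner: "inner_f (proj f) \<phi> = of_real N * inner_f f \<phi>"
    unfolding inner_f_proj_left proj_phi inner_f_mult_right N_def by simp
  have "(N * cmod (inner_f f \<phi>)) ^ 2 \<le> N * Re Y"
    using norm_inner_f_squared_le[OF inner_f_phi_phi, of "proj f"] \<open>0 < N\<close>
    unfolding proj_norm proj_inner by (simp add: norm_mult)
  then have "N * (N * cmod (inner_f f \<phi>) ^ 2) \<le> N * Re Y"
    by (simp add: power2_eq_square mult_ac)
  then have "N * cmod (inner_f f \<phi>) ^ 2 \<le> Re Y"
    using \<open>0 < N\<close> by simp
  also have "\<dots> \<le> cmod Y"
    by (rule complex_Re_le_cmod)
  also have "\<dots> \<le> (\<Sum>u\<in>L. cmod (fhat (Delta (fst u) f) (snd u)))"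
    unfolding Y using norm_sum by (fastforce simp: norm_mult L_def intro: order.trans)
  finally show ?thesis
    unfolding N_def .
qed

lemma inner_f_phi_le_char_dist_set: "(cmod (inner_f f \<phi>) / norm2 f) ^ 4 \<le> char_dist_set f L"
proof -
  define N :: real where "N = 2 ^ CARD('n)"
  define p where "p u = cmod (fhat (Delta (fst u) f) (snd u))" for u
  define k where "k = cmod (inner_f f \<phi>)"
  have "(N * k ^ 2) ^ 2 \<le> (\<Sum>u\<in>L. p u) ^ 2"
    using norm_inner_f_phi_le[of f] unfolding N_def k_def p_def by (intro power_mono) auto
  also have "\<dots> \<le> (\<Sum>u\<in>L. p u ^ 2) * N"
    using sum_squared_le_sum_of_squares[of p L] unfolding card_L N_def by simp
  finally have "N * (N * k ^ 4) \<le> N * (\<Sum>u\<in>L. p u ^ 2)"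
    by (simp add: power2_eq_square power4_eq_xxxx mult_ac)
  then have "k ^ 4 / norm2 f ^ 4 \<le> ((\<Sum>u\<in>L. p u ^ 2) / N) / norm2 f ^ 4"
    by (intro divide_right_mono) (simp_all add: N_def field_simps)
  then show ?thesis
    unfolding char_dist_set_eq by (simp add: k_def p_def N_def power_divide mult.commute)
qed

end

theorem lemma2p17:
  fixes \<phi> f :: "('n::finite) f2vec \<Rightarrow> complex"
  assumes "stabilizer_state \<phi>"
    and "f \<noteq> (\<lambda>x. 0)"
  shows "(cmod (inner_f f \<phi>) / norm2 f) ^ 4 \<le> char_dist_set f (lagr_of \<phi>)
         \<and> char_dist_set f (lagr_of \<phi>) \<le> (U3 f / norm2 f) ^ 4"
proof -
  interpret stabilizer \<phi>
    using assms(1) by unfold_locales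
  show ?thesis
    unfolding lagr_of_eq_L
    using inner_f_phi_le_char_dist_set[of f] char_dist_set_le_U3[where L = L and f = f] card_L
    by simp
qed

end
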